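(* Let $R=\Bbbk[x_1,\dots,x_n]$ be a polynomial ring over a field $\Bbbk$, and let $I$ and $J$ be monomial ideals of $R$ such that every element of $G(I)$ has degree $d_1$ and every element of $G(J)$ has degree $d_2$. Let $k>1$ be an integer and let $m=\max\{i \mid x_i \text{ divides a minimal monomial generator of } I\}$. Suppose that $(x_1^{k-1},\dots,x_m^{k-1})\subseteq J$. Then the ordered pair $(I^{[k]},J)$ is conjoined.
   Context: All ideals are monomial ideals in $R$. For a monomial ideal $I$, $G(I)$ denotes its unique minimal set of monomial generators. $I^{[k]}$ is the ideal generated by $\{u^k : u\in G(I)\}$. An ordered pair $(I,J)$ of monomial ideals of $R$ is called conjoined if (i) $|G(IJ)|=|G(I)|\cdot|G(J)|$, and (ii) there is a minimal presentation $R^s\xrightarrow{\phi}R^t\xrightarrow{\psi}I\to 0$ of $I$ such that all entries of the matrix of $\phi$ belong to $J$. *)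

theory Defs
  imports "HOL-Library.Poly_Mapping"
begin

text \<open>Polynomials in R = k[x_1,...,x_n]: elements of (nat =>0 nat) =>0 'k whose
  monomials (exponent vectors) only involve the variables 1..n.\<close>

type_synonym 'k mpoly = "(nat \<Rightarrow>\<^sub>0 nat) \<Rightarrow>\<^sub>0 'k"

definition polyR :: "nat \<Rightarrow> 'k::field mpoly set" where
  "polyR n = {p. \<forall>a\<in>Poly_Mapping.keys (p::'k mpoly). Poly_Mapping.keys (a::nat \<Rightarrow>\<^sub>0 nat) \<subseteq> {1..n}}"

definition monom :: "(nat \<Rightarrow>\<^sub>0 nat) \<Rightarrow> 'k::field mpoly" where
  "monom a = Poly_Mapping.single a 1"

definition var :: "nat \<Rightarrow> 'k::field mpoly" where
  "var i = monom (Poly_Mapping.single i 1)"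

definition mdvd :: "(nat \<Rightarrow>\<^sub>0 nat) \<Rightarrow> (nat \<Rightarrow>\<^sub>0 nat) \<Rightarrow> bool" where
  "mdvd b a \<longleftrightarrow> (\<forall>i. Poly_Mapping.lookup b i \<le> Poly_Mapping.lookup a i)"

definition mdeg :: "(nat \<Rightarrow>\<^sub>0 nat) \<Rightarrow> nat" where
  "mdeg a = (\<Sum>i\<in>Poly_Mapping.keys a. Poly_Mapping.lookup a i)"

definition ideal_gen :: "nat \<Rightarrow> 'k::field mpoly set \<Rightarrow> 'k mpoly set" where
  "ideal_gen n S = {p. \<exists>gs cs. set gs \<subseteq> S \<and> length cs = length gs \<and> set cs \<subseteq> polyR n
      \<and> p = (\<Sum>i<length gs. cs ! i * gs ! i)}"

definition monomial_ideal :: "nat \<Rightarrow> 'k::field mpoly set \<Rightarrow> bool" where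
  "monomial_ideal n I \<longleftrightarrow> (\<exists>M. (\<forall>a\<in>M. Poly_Mapping.keys a \<subseteq> {1..n}) \<and> I = ideal_gen n (monom ` M))"

definition mingens :: "nat \<Rightarrow> 'k::field mpoly set \<Rightarrow> (nat \<Rightarrow>\<^sub>0 nat) set" where
  "mingens n I = {a. Poly_Mapping.keys a \<subseteq> {1..n} \<and> (monom a :: 'k mpoly) \<in> I \<and>
      (\<forall>b. (monom b :: 'k mpoly) \<in> I \<and> mdvd b a \<longrightarrow> b = a)}"

definition G :: "nat \<Rightarrow> 'k::field mpoly set \<Rightarrow> 'k mpoly set" where
  "G n I = monom ` mingens n I"

definition frob_pow :: "nat \<Rightarrow> nat \<Rightarrow> 'k::field mpoly set \<Rightarrow> 'k mpoly set" where
  "frob_pow n k I = ideal_gen n ((\<lambda>u. u ^ k) ` G n I)"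

definition ideal_prod :: "nat \<Rightarrow> 'k::field mpoly set \<Rightarrow> 'k mpoly set \<Rightarrow> 'k mpoly set" where
  "ideal_prod n I J = ideal_gen n {f * g | f g. f \<in> I \<and> g \<in> J}"

text \<open>Free modules R^t: vectors nat => poly, entries in R, zero from index t on.
  The map psi: R^t -> I sends e_i to gs!i; the map phi: R^s -> R^t is given by
  the t x s matrix A (A i j = entry in row i, column j).\<close>

definition kernel_psi :: "nat \<Rightarrow> 'k::field mpoly list \<Rightarrow> (nat \<Rightarrow> 'k mpoly) set" where
  "kernel_psi n gs = {v. (\<forall>i. v i \<in> polyR n) \<and> (\<forall>i\<ge>length gs. v i = 0)
      \<and> (\<Sum>i<length gs. v i * gs ! i) = 0}"

definition image_phi :: "nat \<Rightarrow> nat \<Rightarrow> nat \<Rightarrow> (nat \<Rightarrow> nat \<Rightarrow> 'k::field mpoly) \<Rightarrow> (nat \<Rightarrow> 'k mpoly) set" where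
  "image_phi n t s A = {v. \<exists>r. (\<forall>j<s. r j \<in> polyR n) \<and>
      v = (\<lambda>i. if i < t then (\<Sum>j<s. A i j * r j) else 0)}"

definition matrix_over :: "nat \<Rightarrow> nat \<Rightarrow> nat \<Rightarrow> (nat \<Rightarrow> nat \<Rightarrow> 'k::field mpoly) \<Rightarrow> bool" where
  "matrix_over n t s A \<longleftrightarrow> (\<forall>i<t. \<forall>j<s. A i j \<in> polyR n)"

definition minimal_presentation ::
  "nat \<Rightarrow> 'k::field mpoly set \<Rightarrow> 'k mpoly list \<Rightarrow> nat \<Rightarrow> (nat \<Rightarrow> nat \<Rightarrow> 'k mpoly) \<Rightarrow> bool" where
  "minimal_presentation n I gs s A \<longleftrightarrow>
     distinct gs \<and> set gs = G n I \<and>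
     matrix_over n (length gs) s A \<and> image_phi n (length gs) s A = kernel_psi n gs \<and>
     (\<forall>s' A'. matrix_over n (length gs) s' A' \<and> image_phi n (length gs) s' A' = kernel_psi n gs
         \<longrightarrow> s \<le> s')"

definition conjoined :: "nat \<Rightarrow> 'k::field mpoly set \<Rightarrow> 'k mpoly set \<Rightarrow> bool" where
  "conjoined n I J \<longleftrightarrow>
     card (G n (ideal_prod n I J)) = card (G n I) * card (G n J) \<and>
     (\<exists>gs s A. minimal_presentation n I gs s A \<and>
        (\<forall>i<length gs. \<forall>j<s. A i j \<in> J))"

end

theory Submission
  imports Defs "HOL-Library.FuncSet"
begin

text \<open>Let u, u' be distinct minimal generators of I. Having the same degree, they differ in
  some variable x_l with l \<le> m in which u has the larger exponent, so the x_l-exponent of u^k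
  exceeds that of u'^k by at least k. Hence whenever u^k divides w u'^k, the monomial w is
  divisible by x_l^k, and therefore lies in J because x_l^(k-1) does.

  Applied to u^k v = u'^k v' with v, v' minimal generators of J, this forces u = u' (otherwise v'
  would be a proper multiple of an element of J dividing x_l^(k-1)); as all products u^k v have
  the same degree they are then pairwise distinct minimal generators of I^[k] J.
  Applied to the monomials of a syzygy of the u^k, it shows that every syzygy has all its
  coordinates in J. The syzygies are generated by the finitely many pair syzygies of the u^k, so
  a minimal presentation exists, and the columns of its matrix are syzygies.\<close>

section \<open>Exponent vectors\<close>

lemma mdvd_diff_add_cancel: "mdvd e x \<Longrightarrow> x - e + e = x"
  by (intro poly_mapping_eqI) (simp add: lookup_add lookup_minus mdvd_def)

lemma mdvd_iff_add: "mdvd e x \<longleftrightarrow> (\<exists>l. x = l + e)"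
  by (metis mdvd_diff_add_cancel mdvd_def lookup_add le_add2)

lemma mdvd_refl [simp]: "mdvd a a"
  by (simp add: mdvd_def)

lemma mdvd_trans: "mdvd a b \<Longrightarrow> mdvd b c \<Longrightarrow> mdvd a c"
  unfolding mdvd_def using le_trans by blast

lemma mdvd_antisym: "mdvd a b \<Longrightarrow> mdvd b a \<Longrightarrow> a = b"
  unfolding mdvd_def by (intro poly_mapping_eqI) (simp add: le_antisym)

lemma mdvd_add_left: "mdvd a b \<Longrightarrow> mdvd a (c + b)"
  unfolding mdvd_def by (simp add: lookup_add trans_le_add2)

lemma mdvd_add_mono: "mdvd a b \<Longrightarrow> mdvd c d \<Longrightarrow> mdvd (a + c) (b + d)"
  unfolding mdvd_def by (simp add: lookup_add add_mono)

lemma single_mdvd_iff: "mdvd (Poly_Mapping.single l j) c \<longleftrightarrow> j \<le> Poly_Mapping.lookup c l"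
proof
  assume "mdvd (Poly_Mapping.single l j) c"
  then show "j \<le> Poly_Mapping.lookup c l"
    unfolding mdvd_def by (metis lookup_single_eq)
qed (simp add: mdvd_def lookup_single when_def)

lemma keys_add_nat:
  "Poly_Mapping.keys (a + b :: 'a \<Rightarrow>\<^sub>0 nat) = Poly_Mapping.keys a \<union> Poly_Mapping.keys b"
  by (rule set_eqI) (simp add: in_keys_iff lookup_add)

lemma keys_diff_nat: "Poly_Mapping.keys (a - b :: nat \<Rightarrow>\<^sub>0 nat) \<subseteq> Poly_Mapping.keys a"
  by (auto simp: in_keys_iff lookup_minus)

definition mlcm :: "(nat \<Rightarrow>\<^sub>0 nat) \<Rightarrow> (nat \<Rightarrow>\<^sub>0 nat) \<Rightarrow> (nat \<Rightarrow>\<^sub>0 nat)" where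
  "mlcm a b = Abs_poly_mapping (\<lambda>i. max (Poly_Mapping.lookup a i) (Poly_Mapping.lookup b i))"

lemma lookup_mlcm [simp]:
  "Poly_Mapping.lookup (mlcm a b) i = max (Poly_Mapping.lookup a i) (Poly_Mapping.lookup b i)"
proof -
  have "{i. max (Poly_Mapping.lookup a i) (Poly_Mapping.lookup b i) \<noteq> 0}
      \<subseteq> Poly_Mapping.keys a \<union> Poly_Mapping.keys b"
    by (auto simp: in_keys_iff max_def)
  then have "finite {i. max (Poly_Mapping.lookup a i) (Poly_Mapping.lookup b i) \<noteq> 0}"
    by (rule finite_subset) simp
  then show ?thesis unfolding mlcm_def by simp
qed

lemma mdvd_mlcm1: "mdvd a (mlcm a b)"
  and mdvd_mlcm2: "mdvd b (mlcm a b)"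
  and mlcm_least: "mdvd a c \<Longrightarrow> mdvd b c \<Longrightarrow> mdvd (mlcm a b) c"
  by (simp_all add: mdvd_def)

lemma keys_mlcm: "Poly_Mapping.keys (mlcm a b) = Poly_Mapping.keys a \<union> Poly_Mapping.keys b"
  by (rule set_eqI) (simp add: in_keys_iff)

definition mscale :: "nat \<Rightarrow> (nat \<Rightarrow>\<^sub>0 nat) \<Rightarrow> (nat \<Rightarrow>\<^sub>0 nat)" where
  "mscale j a = Poly_Mapping.map ((*) j) a"

lemma lookup_mscale [simp]: "Poly_Mapping.lookup (mscale j a) i = j * Poly_Mapping.lookup a i"
  unfolding mscale_def map.rep_eq by (simp add: when_def)

lemma mscale_0: "mscale 0 a = 0"
  and mscale_Suc: "mscale (Suc j) a = a + mscale j a"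
  by (rule poly_mapping_eqI, simp add: lookup_add)+

lemma mscale_single: "mscale j (Poly_Mapping.single l 1) = Poly_Mapping.single l j"
  by (rule poly_mapping_eqI) (simp add: lookup_single when_def)

lemma keys_mscale: "j > 0 \<Longrightarrow> Poly_Mapping.keys (mscale j a) = Poly_Mapping.keys a"
  by (rule set_eqI) (simp add: in_keys_iff)

lemma mdvd_mscale_iff: "j > 0 \<Longrightarrow> mdvd (mscale j a) (mscale j b) \<longleftrightarrow> mdvd a b"
  unfolding mdvd_def by simp

lemma mdeg_superset:
  "finite F \<Longrightarrow> Poly_Mapping.keys a \<subseteq> F \<Longrightarrow> mdeg a = (\<Sum>i\<in>F. Poly_Mapping.lookup a i)"
  unfolding mdeg_def by (rule sum.mono_neutral_left) (auto simp: in_keys_iff)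

lemma mdeg_add: "mdeg (a + b) = mdeg a + mdeg b"
proof -
  let ?F = "Poly_Mapping.keys a \<union> Poly_Mapping.keys b"
  have "mdeg (a + b) = (\<Sum>i\<in>?F. Poly_Mapping.lookup (a + b) i)"
    by (rule mdeg_superset) (auto simp: keys_add_nat)
  also have "\<dots> = (\<Sum>i\<in>?F. Poly_Mapping.lookup a i) + (\<Sum>i\<in>?F. Poly_Mapping.lookup b i)"
    by (simp add: lookup_add sum.distrib)
  also have "\<dots> = mdeg a + mdeg b"
    by (simp add: mdeg_superset[symmetric])
  finally show ?thesis .
qed

lemma mdeg_mscale: "mdeg (mscale j a) = j * mdeg a"
proof -
  have "mdeg (mscale j a) = (\<Sum>i\<in>Poly_Mapping.keys a. Poly_Mapping.lookup (mscale j a) i)"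
    by (rule mdeg_superset) (auto simp: in_keys_iff)
  then show ?thesis by (simp add: mdeg_def sum_distrib_left)
qed

lemma mdeg_eq_0_iff: "mdeg a = 0 \<longleftrightarrow> a = 0"
proof
  assume "mdeg a = 0"
  then have "\<forall>i\<in>Poly_Mapping.keys a. Poly_Mapping.lookup a i = 0"
    unfolding mdeg_def by simp
  then show "a = 0" by (intro poly_mapping_eqI) (metis in_keys_iff lookup_zero)
qed (simp add: mdeg_def)

lemma mdvd_mdeg: "mdvd b a \<Longrightarrow> mdeg a = mdeg (a - b) + mdeg b"
  using mdeg_add[of "a - b" b] by (simp add: mdvd_diff_add_cancel)

lemma mdvd_mdeg_le: "mdvd b a \<Longrightarrow> mdeg b \<le> mdeg a"
  by (simp add: mdvd_mdeg)

lemma mdvd_mdeg_le_imp_eq: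
  assumes "mdvd b a" "mdeg a \<le> mdeg b"
  shows "b = a"
proof -
  have "a - b = 0"
    using assms mdvd_mdeg[OF assms(1)] by (simp add: mdeg_eq_0_iff[symmetric])
  then show ?thesis using mdvd_diff_add_cancel[OF assms(1)] by simp
qed

lemma mdeg_eq_imp_lookup_less:
  assumes "mdeg u = mdeg u'" "u \<noteq> u'"
  obtains l where "Poly_Mapping.lookup u' l < Poly_Mapping.lookup u l"
proof -
  have "\<not> mdvd u u'"
    using mdvd_mdeg_le_imp_eq assms by fastforce
  then show ?thesis using that unfolding mdvd_def by (meson not_le)
qed

lemma lookup_le_mdeg: "Poly_Mapping.lookup a i \<le> mdeg a"
  unfolding mdeg_def
  by (cases "i \<in> Poly_Mapping.keys a") (auto intro: member_le_sum simp: in_keys_iff)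

lemma finite_mdeg_eq: "finite {a. Poly_Mapping.keys a \<subseteq> {1..n} \<and> mdeg a = d}"
  (is "finite ?S")
proof -
  let ?f = "\<lambda>a. restrict (Poly_Mapping.lookup a) {1..n}"
  have "inj_on ?f ?S"
  proof (rule inj_onI, rule poly_mapping_eqI)
    fix a b i assume a: "a \<in> ?S" and b: "b \<in> ?S" and eq: "?f a = ?f b"
    show "Poly_Mapping.lookup a i = Poly_Mapping.lookup b i"
    proof (cases "i \<in> {1..n}")
      case True
      then show ?thesis using fun_cong[OF eq, of i] by simp
    next
      case False
      then have "i \<notin> Poly_Mapping.keys a" "i \<notin> Poly_Mapping.keys b" using a b by auto
      then show ?thesis by (simp add: in_keys_iff)
    qed
  qed
  moreover have "?f ` ?S \<subseteq> PiE {1..n} (\<lambda>_. {0..d})"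
    using lookup_le_mdeg by auto
  then have "finite (?f ` ?S)"
    by (rule finite_subset) (simp add: finite_PiE)
  ultimately show ?thesis by (rule finite_imageD[rotated])
qed

definition minset :: "(nat \<Rightarrow>\<^sub>0 nat) set \<Rightarrow> (nat \<Rightarrow>\<^sub>0 nat) set" where
  "minset M = {a\<in>M. \<forall>b\<in>M. mdvd b a \<longrightarrow> b = a}"

lemma minset_subset: "minset M \<subseteq> M"
  unfolding minset_def by blast

lemma ex_minset_mdvd: "a \<in> M \<Longrightarrow> \<exists>b\<in>minset M. mdvd b a"
proof (induction "mdeg a" arbitrary: a rule: less_induct)
  case less
  show ?case
  proof (cases "a \<in> minset M")
    case False
    then obtain c where c: "c \<in> M" "mdvd c a" "c \<noteq> a"
      using less.prems unfolding minset_def by blast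
    then have "mdeg c < mdeg a"
      using mdvd_mdeg_le_imp_eq mdvd_mdeg_le by (meson le_neq_implies_less not_le)
    then show ?thesis using less.hyps c mdvd_trans by blast
  qed (use mdvd_refl in blast)
qed

section \<open>Polynomials and monomial ideals\<close>

lemma monom_mult: "monom a * monom b = (monom (a + b) :: 'k::field mpoly)"
  unfolding monom_def mult_single by simp

lemma single_mult_monom:
  "Poly_Mapping.single a c * monom b = Poly_Mapping.single (a + b) (c :: 'k::field)"
  unfolding monom_def mult_single by simp

lemma monom_power: "(monom a :: 'k::field mpoly) ^ j = monom (mscale j a)"
  by (induction j) (simp_all add: mscale_0 mscale_Suc monom_mult, simp add: monom_def)

lemma var_power: "(var l :: 'k::field mpoly) ^ j = monom (Poly_Mapping.single l j)"
  unfolding var_def monom_power mscale_single ..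

lemma inj_monom: "inj (monom :: _ \<Rightarrow> 'k::field mpoly)"
  unfolding monom_def by (rule injI) (metis lookup_single_eq lookup_single_not_eq one_neq_zero)

lemma lookup_mult_monom:
  "Poly_Mapping.lookup (p * monom e) x =
     (if mdvd e x then Poly_Mapping.lookup p (x - e) else (0::'k::field))"
proof -
  have single_coeff: "(\<Sum>q. ((1::'k) when e = q) when x = l + q) = (1 when x = l + e)" for l
  proof -
    have "(\<Sum>q. ((1::'k) when e = q) when x = l + q) = (\<Sum>q. ((1::'k) when x = l + e) when e = q)"
      by (intro Sum_any.cong) (auto simp: when_def)
    then show ?thesis by simp
  qed
  have "Poly_Mapping.lookup (p * monom e) x = (\<Sum>l. Poly_Mapping.lookup p l when x = l + e)"
    unfolding lookup_mult monom_def lookup_single single_coeff by (simp add: mult_when)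
  also have "\<dots> = (if mdvd e x then Poly_Mapping.lookup p (x - e) else 0)"
  proof (cases "mdvd e x")
    case True
    then have "\<And>l. x = l + e \<longleftrightarrow> l = x - e"
      using mdvd_diff_add_cancel by force
    then show ?thesis using True by simp
  next
    case False
    then show ?thesis using mdvd_iff_add by (simp add: when_def)
  qed
  finally show ?thesis .
qed

lemma sum_single_lookup:
  "(\<Sum>c\<in>Poly_Mapping.keys p. Poly_Mapping.single c (Poly_Mapping.lookup p c)) = p"
  by (rule poly_mapping_eqI)
    (simp add: lookup_sum lookup_single when_def in_keys_iff sum.delta_remove)

lemma sum_single: "(\<Sum>i\<in>A. Poly_Mapping.single x (f i)) = Poly_Mapping.single x (sum f A)"
  by (rule poly_mapping_eqI) (simp add: lookup_sum lookup_single when_def)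

lemma polyR_0 [simp]: "0 \<in> polyR n"
  and polyR_1 [simp]: "1 \<in> polyR n"
  by (simp_all add: polyR_def)

lemma polyR_single: "Poly_Mapping.keys a \<subseteq> {1..n} \<Longrightarrow> Poly_Mapping.single a c \<in> polyR n"
  unfolding polyR_def by simp

lemma polyR_monom: "Poly_Mapping.keys a \<subseteq> {1..n} \<Longrightarrow> monom a \<in> polyR n"
  unfolding monom_def by (rule polyR_single)

lemma polyR_add: "p \<in> polyR n \<Longrightarrow> q \<in> polyR n \<Longrightarrow> p + q \<in> polyR n"
  unfolding polyR_def using keys_add[of p q] by blast

lemma polyR_uminus: "p \<in> polyR n \<Longrightarrow> - p \<in> polyR n"
  unfolding polyR_def by simp

lemma polyR_diff: "p \<in> polyR n \<Longrightarrow> q \<in> polyR n \<Longrightarrow> p - q \<in> polyR n"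
  using polyR_add[of p n "- q"] polyR_uminus[of q n] by simp

lemma polyR_mult: "p \<in> polyR n \<Longrightarrow> q \<in> polyR n \<Longrightarrow> p * q \<in> polyR n"
  unfolding polyR_def by (fastforce simp: keys_add_nat dest: keys_mult[THEN subsetD])

lemma polyR_sum: "(\<And>i. i \<in> A \<Longrightarrow> f i \<in> polyR n) \<Longrightarrow> sum f A \<in> polyR n"
  by (induction A rule: infinite_finite_induct) (auto intro: polyR_add)

definition is_ideal :: "nat \<Rightarrow> 'k::field mpoly set \<Rightarrow> bool" where
  "is_ideal n Y \<longleftrightarrow> 0 \<in> Y \<and> (\<forall>x\<in>Y. \<forall>y\<in>Y. x + y \<in> Y) \<and> (\<forall>q\<in>polyR n. \<forall>x\<in>Y. q * x \<in> Y)"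

lemma is_ideal_sum: "is_ideal n Y \<Longrightarrow> (\<And>i. i \<in> A \<Longrightarrow> f i \<in> Y) \<Longrightarrow> sum f A \<in> Y"
  unfolding is_ideal_def by (induction A rule: infinite_finite_induct) auto

lemma ideal_gen_least:
  assumes "is_ideal n Y" "S \<subseteq> Y"
  shows "ideal_gen n S \<subseteq> Y"
proof
  fix p assume "p \<in> ideal_gen n S"
  then obtain gs cs where g: "set gs \<subseteq> S" "length cs = length gs" "set cs \<subseteq> polyR n"
    and p: "p = (\<Sum>i<length gs. cs ! i * gs ! i)"
    unfolding ideal_gen_def by blast
  have "cs ! i * gs ! i \<in> Y" if "i < length gs" for i
    using that g assms unfolding is_ideal_def by (metis nth_mem subsetD)
  then show "p \<in> Y" unfolding p by (auto intro: is_ideal_sum[OF assms(1)])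
qed

lemma mult_in_ideal_gen: "q \<in> polyR n \<Longrightarrow> g \<in> S \<Longrightarrow> q * g \<in> ideal_gen n S"
  unfolding ideal_gen_def by (rule CollectI, rule exI[of _ "[g]"], rule exI[of _ "[q]"]) simp

lemma ideal_gen_mono: "S \<subseteq> T \<Longrightarrow> ideal_gen n S \<subseteq> ideal_gen n T"
  unfolding ideal_gen_def by blast

lemma sum_lessThan_add:
  fixes a b :: nat shows "(\<Sum>i<a + b. f i) = (\<Sum>i<a. f i) + (\<Sum>i<b. f (a + i))"
  by (induction b) (auto simp: add_ac)

lemma is_ideal_ideal_gen: "is_ideal n (ideal_gen n S :: 'k::field mpoly set)"
  unfolding is_ideal_def
proof (intro conjI ballI)
  show "0 \<in> ideal_gen n S"
    unfolding ideal_gen_def by (rule CollectI, rule exI[of _ "[]"], rule exI[of _ "[]"]) simp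
next
  fix x y :: "'k mpoly" assume "x \<in> ideal_gen n S" "y \<in> ideal_gen n S"
  then obtain gs cs hs ds where
    g: "set gs \<subseteq> S" "length cs = length gs" "set cs \<subseteq> polyR n"
      "x = (\<Sum>i<length gs. cs ! i * gs ! i)" and
    h: "set hs \<subseteq> S" "length ds = length hs" "set ds \<subseteq> polyR n"
      "y = (\<Sum>i<length hs. ds ! i * hs ! i)"
    unfolding ideal_gen_def by blast
  have "x + y = (\<Sum>i<length (gs @ hs). (cs @ ds) ! i * (gs @ hs) ! i)"
    unfolding length_append sum_lessThan_add g(4) h(4)
    by (intro arg_cong2[where f = "(+)"] sum.cong) (auto simp: nth_append g(2))
  moreover have "set (gs @ hs) \<subseteq> S" "length (cs @ ds) = length (gs @ hs)" "set (cs @ ds) \<subseteq> polyR n"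
    using g h by auto
  ultimately show "x + y \<in> ideal_gen n S"
    unfolding ideal_gen_def by blast
next
  fix q x :: "'k mpoly" assume q: "q \<in> polyR n" and "x \<in> ideal_gen n S"
  then obtain gs cs where g: "set gs \<subseteq> S" "length cs = length gs" "set cs \<subseteq> polyR n"
    "x = (\<Sum>i<length gs. cs ! i * gs ! i)"
    unfolding ideal_gen_def by blast
  have "q * x = (\<Sum>i<length gs. map ((*) q) cs ! i * gs ! i)"
    unfolding g(4) sum_distrib_left by (intro sum.cong) (auto simp: g(2) mult.assoc)
  moreover have "length (map ((*) q) cs) = length gs" "set (map ((*) q) cs) \<subseteq> polyR n"
    using g q by (auto intro: polyR_mult)
  ultimately show "q * x \<in> ideal_gen n S"
    unfolding ideal_gen_def using g(1) by blast
qed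

definition mideal :: "nat \<Rightarrow> (nat \<Rightarrow>\<^sub>0 nat) set \<Rightarrow> 'k::field mpoly set" where
  "mideal n M = {p \<in> polyR n. \<forall>c\<in>Poly_Mapping.keys p. \<exists>b\<in>M. mdvd b c}"

lemma monom_in_mideal_iff:
  "(monom a :: 'k::field mpoly) \<in> mideal n M \<longleftrightarrow> Poly_Mapping.keys a \<subseteq> {1..n} \<and> (\<exists>b\<in>M. mdvd b a)"
  by (simp add: mideal_def polyR_def monom_def)

lemma is_ideal_mideal: "is_ideal n (mideal n M :: 'k::field mpoly set)"
  unfolding is_ideal_def
proof (intro conjI ballI)
  fix x y :: "'k mpoly" assume "x \<in> mideal n M" "y \<in> mideal n M"
  then show "x + y \<in> mideal n M"
    unfolding mideal_def using keys_add[of x y] by (auto intro: polyR_add)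
next
  fix q x :: "'k mpoly" assume "q \<in> polyR n" "x \<in> mideal n M"
  then show "q * x \<in> mideal n M"
    unfolding mideal_def
    by (fastforce intro: polyR_mult mdvd_add_left dest: keys_mult[THEN subsetD])
qed (simp add: mideal_def)

lemma ideal_gen_monom_eq_mideal:
  assumes M: "\<forall>a\<in>M. Poly_Mapping.keys a \<subseteq> {1..n}"
  shows "ideal_gen n (monom ` M) = (mideal n M :: 'k::field mpoly set)"
proof
  show "ideal_gen n (monom ` M) \<subseteq> (mideal n M :: 'k mpoly set)"
  proof (rule ideal_gen_least[OF is_ideal_mideal])
    show "monom ` M \<subseteq> (mideal n M :: 'k mpoly set)"
      unfolding image_subset_iff monom_in_mideal_iff using M mdvd_refl by blast
  qed
next
  show "(mideal n M :: 'k mpoly set) \<subseteq> ideal_gen n (monom ` M)"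
  proof
    fix p :: "'k mpoly" assume p: "p \<in> mideal n M"
    have "Poly_Mapping.single c (Poly_Mapping.lookup p c) \<in> ideal_gen n (monom ` M)"
      if c: "c \<in> Poly_Mapping.keys p" for c
    proof -
      obtain b where b: "b \<in> M" "mdvd b c" using p c unfolding mideal_def by blast
      have "Poly_Mapping.keys (c - b) \<subseteq> {1..n}"
        using p c keys_diff_nat[of c b] unfolding mideal_def polyR_def by blast
      then have "Poly_Mapping.single (c - b) (Poly_Mapping.lookup p c) * monom b \<in> ideal_gen n (monom ` M)"
        using b(1) by (intro mult_in_ideal_gen polyR_single) auto
      then show ?thesis by (simp add: single_mult_monom mdvd_diff_add_cancel[OF b(2)])
    qed
    then have "(\<Sum>c\<in>Poly_Mapping.keys p. Poly_Mapping.single c (Poly_Mapping.lookup p c))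
        \<in> ideal_gen n (monom ` M)"
      by (intro is_ideal_sum[OF is_ideal_ideal_gen])
    then show "p \<in> ideal_gen n (monom ` M)" by (simp add: sum_single_lookup)
  qed
qed

section \<open>Minimal generators of Frobenius powers and products\<close>

lemma mingens_ideal_gen_monom:
  assumes M: "\<forall>a\<in>M. Poly_Mapping.keys a \<subseteq> {1..n}"
  shows "mingens n (ideal_gen n (monom ` M) :: 'k::field mpoly set) = minset M"
proof -
  have in_I: "(monom a :: 'k mpoly) \<in> ideal_gen n (monom ` M) \<longleftrightarrow>
      Poly_Mapping.keys a \<subseteq> {1..n} \<and> (\<exists>b\<in>M. mdvd b a)" for a
    unfolding ideal_gen_monom_eq_mideal[OF M] by (rule monom_in_mideal_iff)
  show ?thesis
  proof (intro set_eqI iffI)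
    fix a assume "a \<in> mingens n (ideal_gen n (monom ` M) :: 'k mpoly set)"
    then have a: "\<exists>b\<in>M. mdvd b a"
      and a_min: "\<And>b. b \<in> M \<Longrightarrow> mdvd b a \<Longrightarrow> b = a"
      unfolding mingens_def in_I using M mdvd_refl by blast+
    then show "a \<in> minset M" unfolding minset_def by blast
  next
    fix a assume a: "a \<in> minset M"
    then have "a \<in> M" by (rule minset_subset[THEN subsetD])
    moreover have "b = a" if "c \<in> M" "mdvd c b" "mdvd b a" for b c
    proof -
      have "c = a" using a that(1) mdvd_trans[OF that(2,3)] unfolding minset_def by blast
      then show "b = a" using that(2,3) mdvd_antisym by blast
    qed
    ultimately show "a \<in> mingens n (ideal_gen n (monom ` M) :: 'k mpoly set)"
      unfolding mingens_def in_I using M mdvd_refl by blast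
  qed
qed

lemma G_ideal_gen_monom:
  "\<forall>a\<in>M. Poly_Mapping.keys a \<subseteq> {1..n} \<Longrightarrow>
    G n (ideal_gen n (monom ` M) :: 'k::field mpoly set) = monom ` minset M"
  unfolding G_def by (simp add: mingens_ideal_gen_monom)

lemma frob_pow_ideal_gen_monom:
  "\<forall>a\<in>M. Poly_Mapping.keys a \<subseteq> {1..n} \<Longrightarrow>
    frob_pow n k (ideal_gen n (monom ` M) :: 'k::field mpoly set)
      = ideal_gen n (monom ` mscale k ` minset M)"
  unfolding frob_pow_def by (simp add: G_ideal_gen_monom image_image monom_power)

lemma minset_mscale_minset: "j > 0 \<Longrightarrow> minset (mscale j ` minset M) = mscale j ` minset M"
  unfolding minset_def by (auto simp: mdvd_mscale_iff)

lemma keys_sums_subset: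
  fixes A B :: "('a \<Rightarrow>\<^sub>0 nat) set"
  shows "\<forall>a\<in>A. Poly_Mapping.keys a \<subseteq> X \<Longrightarrow> \<forall>b\<in>B. Poly_Mapping.keys b \<subseteq> X \<Longrightarrow>
    \<forall>c\<in>{a + b | a b. a \<in> A \<and> b \<in> B}. Poly_Mapping.keys c \<subseteq> X"
  by (auto simp: keys_add_nat subset_iff)

lemma ideal_prod_ideal_gen_monom:
  assumes A: "\<forall>a\<in>A. Poly_Mapping.keys a \<subseteq> {1..n}" and B: "\<forall>b\<in>B. Poly_Mapping.keys b \<subseteq> {1..n}"
  shows "ideal_prod n (ideal_gen n (monom ` A)) (ideal_gen n (monom ` B))
    = (ideal_gen n (monom ` {a + b | a b. a \<in> A \<and> b \<in> B}) :: 'k::field mpoly set)"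
    (is "ideal_prod n ?I ?J = ideal_gen n (monom ` ?S)")
proof
  have S: "\<forall>c\<in>?S. Poly_Mapping.keys c \<subseteq> {1..n}"
    using A B by (rule keys_sums_subset)
  show "ideal_prod n ?I ?J \<subseteq> ideal_gen n (monom ` ?S)"
    unfolding ideal_prod_def
  proof (intro ideal_gen_least[OF is_ideal_ideal_gen] subsetI)
    fix x assume "x \<in> {f * g |f g. f \<in> ?I \<and> g \<in> ?J}"
    then obtain f g where x: "x = f * g" and f: "f \<in> mideal n A" and g: "g \<in> mideal n B"
      using ideal_gen_monom_eq_mideal A B by blast
    have "\<exists>s\<in>?S. mdvd s c" if c: "c \<in> Poly_Mapping.keys x" for c
    proof -
      obtain c1 c2 where c: "c = c1 + c2" "c1 \<in> Poly_Mapping.keys f" "c2 \<in> Poly_Mapping.keys g"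
        using c keys_mult[of f g] x by blast
      then obtain a b where "a \<in> A" "mdvd a c1" "b \<in> B" "mdvd b c2"
        using f g unfolding mideal_def by blast
      then show ?thesis using c(1) mdvd_add_mono by blast
    qed
    moreover have "x \<in> polyR n" using f g x polyR_mult unfolding mideal_def by blast
    ultimately show "x \<in> ideal_gen n (monom ` ?S)"
      unfolding ideal_gen_monom_eq_mideal[OF S] mideal_def by blast
  qed
  show "ideal_gen n (monom ` ?S) \<subseteq> ideal_prod n ?I ?J"
    unfolding ideal_prod_def
  proof (intro ideal_gen_mono subsetI)
    fix x assume "x \<in> (monom ` ?S :: 'k mpoly set)"
    then obtain a b where "x = monom a * monom b" "a \<in> A" "b \<in> B"
      by (auto simp: monom_mult)
    moreover have "monom a \<in> ?I" if "a \<in> A" for a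
      using that by (intro mult_in_ideal_gen[of 1, simplified]) auto
    moreover have "monom b \<in> ?J" if "b \<in> B" for b
      using that by (intro mult_in_ideal_gen[of 1, simplified]) auto
    ultimately show "x \<in> {f * g |f g. f \<in> ?I \<and> g \<in> ?J}" by blast
  qed
qed

lemma minset_sums:
  assumes A: "\<forall>a\<in>A. mdeg a = d" and B: "\<forall>b\<in>minset B. mdeg b = e"
  shows "minset {a + b | a b. a \<in> A \<and> b \<in> B} = (\<lambda>(a, b). a + b) ` (A \<times> minset B)"
    (is "minset ?S = ?P")
proof
  have P_subset: "?P \<subseteq> ?S"
  proof
    fix x assume "x \<in> ?P"
    then obtain a b where "x = a + b" "a \<in> A" "b \<in> minset B" by auto
    then show "x \<in> ?S" using minset_subset by blast
  qed
  have reduce: "\<exists>x'\<in>?P. mdvd x' x" if "x \<in> ?S" for x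
  proof -
    obtain a b where ab: "x = a + b" "a \<in> A" "b \<in> B" using \<open>x \<in> ?S\<close> by blast
    obtain b' where b': "b' \<in> minset B" "mdvd b' b" using ex_minset_mdvd[OF ab(3)] by blast
    have "a + b' \<in> ?P" using ab(2) b'(1) by (intro image_eqI[of _ _ "(a, b')"]) auto
    moreover have "mdvd (a + b') x" using ab(1) mdvd_add_mono[OF mdvd_refl b'(2)] by simp
    ultimately show ?thesis by blast
  qed
  show "minset ?S \<subseteq> ?P"
  proof
    fix x assume x: "x \<in> minset ?S"
    have "x \<in> ?S" using minset_subset x by (rule subsetD)
    then obtain x' where x': "x' \<in> ?P" "mdvd x' x" using reduce by blast
    have "x' \<in> ?S" using x'(1) P_subset by (rule rev_subsetD)
    then have "x' = x" using x x'(2) unfolding minset_def by blast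
    then show "x \<in> ?P" using x' by simp
  qed
  show "?P \<subseteq> minset ?S"
  proof
    fix x assume x: "x \<in> ?P"
    have deg: "mdeg y = d + e" if "y \<in> ?P" for y
      using that A B by (auto simp: mdeg_add)
    have "y = x" if y: "y \<in> ?S" "mdvd y x" for y
    proof -
      obtain y' where y': "y' \<in> ?P" "mdvd y' y" using reduce y(1) by blast
      have "y' = x"
        using mdvd_mdeg_le_imp_eq[OF mdvd_trans[OF y'(2) y(2)]] deg[OF y'(1)] deg[OF x] by simp
      then show "y = x" using y'(2) y(2) mdvd_antisym by blast
    qed
    moreover have "x \<in> ?S" using x P_subset by (rule rev_subsetD)
    ultimately show "x \<in> minset ?S" unfolding minset_def by blast
  qed
qed

lemma mscale_mdvd_imp_lookup_ge:
  assumes "mdeg u = mdeg u'" "u \<noteq> u'" "mdvd (mscale k u) (c + mscale k u')"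
  shows "\<exists>l\<in>Poly_Mapping.keys u. k \<le> Poly_Mapping.lookup c l"
proof -
  obtain l where l: "Poly_Mapping.lookup u' l < Poly_Mapping.lookup u l"
    using mdeg_eq_imp_lookup_less assms(1,2) by blast
  have "k * Poly_Mapping.lookup u l \<le> Poly_Mapping.lookup c l + k * Poly_Mapping.lookup u' l"
    using assms(3) unfolding mdvd_def by (auto simp: lookup_add)
  moreover have "k * Poly_Mapping.lookup u' l + k \<le> k * Poly_Mapping.lookup u l"
    using l by (metis Suc_leI mult_Suc_right mult_le_mono2 add.commute)
  ultimately have "k \<le> Poly_Mapping.lookup c l" by linarith
  moreover have "l \<in> Poly_Mapping.keys u" using l by (simp add: in_keys_iff)
  ultimately show ?thesis by blast
qed

lemma inj_on_mscale_sums: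
  assumes "k > 0" and deg: "\<forall>u\<in>U. mdeg u = d"
    and var_powers: "\<forall>u\<in>U. \<forall>l\<in>Poly_Mapping.keys u. \<exists>b\<in>B. mdvd b (Poly_Mapping.single l (k - 1))"
  shows "inj_on (\<lambda>(a, b). a + b) (mscale k ` U \<times> minset B)"
proof (rule inj_onI, clarify)
  fix u b u' b' assume u: "u \<in> U" "u' \<in> U" and b: "b \<in> minset B" "b' \<in> minset B"
    and eq: "mscale k u + b = mscale k u' + b'"
  have "u = u'"
  proof (rule ccontr)
    assume "u \<noteq> u'"
    moreover have "mdeg u = mdeg u'" using deg u by simp
    moreover have "mdvd (mscale k u) (b' + mscale k u')"
      using eq mdvd_iff_add by (metis add.commute)
    ultimately obtain l where l: "l \<in> Poly_Mapping.keys u" "k \<le> Poly_Mapping.lookup b' l"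
      using mscale_mdvd_imp_lookup_ge by blast
    then obtain b0 where b0: "b0 \<in> B" "mdvd b0 (Poly_Mapping.single l (k - 1))"
      using var_powers u by blast
    then have "mdvd b0 b'"
      using l(2) single_mdvd_iff[of l "k - 1" b'] mdvd_trans by simp
    then have "b0 = b'" using b0(1) b(2) unfolding minset_def by blast
    then have "Poly_Mapping.lookup b' l \<le> k - 1"
      using b0(2) unfolding mdvd_def by (metis lookup_single_eq)
    then show False using l(2) \<open>k > 0\<close> by linarith
  qed
  then show "mscale k u = mscale k u' \<and> b = b'" using eq by simp
qed

lemma card_G_ideal_prod_frob_pow:
  assumes I: "I = ideal_gen n (monom ` MI)" and J: "J = ideal_gen n (monom ` MJ)"
    and MI: "\<forall>a\<in>MI. Poly_Mapping.keys a \<subseteq> {1..n}" and MJ: "\<forall>b\<in>MJ. Poly_Mapping.keys b \<subseteq> {1..n}"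
    and "k > 0" and degI: "\<forall>u\<in>minset MI. mdeg u = d1" and degJ: "\<forall>b\<in>minset MJ. mdeg b = d2"
    and var_powers:
      "\<forall>u\<in>minset MI. \<forall>l\<in>Poly_Mapping.keys u. \<exists>b\<in>MJ. mdvd b (Poly_Mapping.single l (k - 1))"
  shows "card (G n (ideal_prod n (frob_pow n k I) J) :: 'k::field mpoly set)
    = card (G n (frob_pow n k I)) * card (G n J)"
proof -
  let ?F = "mscale k ` minset MI"
  have F: "\<forall>a\<in>?F. Poly_Mapping.keys a \<subseteq> {1..n}"
    using MI minset_subset keys_mscale \<open>k > 0\<close> by fastforce
  have "ideal_prod n (frob_pow n k I) J = ideal_gen n (monom ` {a + b | a b. a \<in> ?F \<and> b \<in> MJ})"
    unfolding I J frob_pow_ideal_gen_monom[OF MI] using F MJ by (rule ideal_prod_ideal_gen_monom)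
  moreover have "\<forall>c\<in>{a + b | a b. a \<in> ?F \<and> b \<in> MJ}. Poly_Mapping.keys c \<subseteq> {1..n}"
    using F MJ by (rule keys_sums_subset)
  moreover have "minset {a + b | a b. a \<in> ?F \<and> b \<in> MJ} = (\<lambda>(a, b). a + b) ` (?F \<times> minset MJ)"
    using degI degJ by (intro minset_sums) (auto simp: mdeg_mscale)
  ultimately have "G n (ideal_prod n (frob_pow n k I) J) = monom ` (\<lambda>(a, b). a + b) ` (?F \<times> minset MJ)"
    by (simp add: G_ideal_gen_monom)
  moreover have "G n (frob_pow n k I) = monom ` ?F"
    unfolding I frob_pow_ideal_gen_monom[OF MI] G_ideal_gen_monom[OF F]
    by (simp add: minset_mscale_minset \<open>k > 0\<close>)
  moreover have "G n J = monom ` minset MJ"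
    unfolding J by (rule G_ideal_gen_monom[OF MJ])
  moreover have "inj_on (monom :: _ \<Rightarrow> 'k mpoly) X" for X
    using inj_monom by (rule inj_on_subset) simp
  ultimately show ?thesis
    by (simp add: card_image card_image[OF inj_on_mscale_sums[OF \<open>k > 0\<close> degI var_powers]]
        card_cartesian_product)
qed

section \<open>Presentations of monomial ideals\<close>

lemma zero_in_image_phi: "(\<lambda>_. 0) \<in> image_phi n t s A"
  unfolding image_phi_def by (rule CollectI, rule exI[of _ "\<lambda>_. 0"]) auto

lemma image_phi_add:
  assumes "v \<in> image_phi n t s A" "w \<in> image_phi n t s A"
  shows "(\<lambda>i. v i + w i) \<in> image_phi n t s A"
proof -
  obtain r r' where r: "\<forall>j<s. r j \<in> polyR n" "v = (\<lambda>i. if i < t then \<Sum>j<s. A i j * r j else 0)"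
    and r': "\<forall>j<s. r' j \<in> polyR n" "w = (\<lambda>i. if i < t then \<Sum>j<s. A i j * r' j else 0)"
    using assms unfolding image_phi_def by blast
  have "(\<lambda>i. v i + w i) = (\<lambda>i. if i < t then \<Sum>j<s. A i j * (r j + r' j) else 0)"
    unfolding r(2) r'(2) by (auto simp: algebra_simps sum.distrib)
  moreover have "\<forall>j<s. r j + r' j \<in> polyR n" using r(1) r'(1) polyR_add by blast
  ultimately show ?thesis
    unfolding image_phi_def by (intro CollectI exI[of _ "\<lambda>j. r j + r' j"] conjI)
qed

lemma image_phi_sum:
  "finite X \<Longrightarrow> (\<And>x. x \<in> X \<Longrightarrow> f x \<in> image_phi n t s A) \<Longrightarrow>
    (\<lambda>i. \<Sum>x\<in>X. f x i) \<in> image_phi n t s A"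
proof (induction X rule: finite_induct)
  case (insert x X)
  then show ?case using image_phi_add[of "f x" n t s A] by simp
qed (simp add: zero_in_image_phi)

lemma image_phi_column:
  assumes "p \<in> polyR n" "c < s"
  shows "(\<lambda>i. if i < t then A i c * p else 0) \<in> image_phi n t s A"
proof -
  define r where "r j = (if j = c then p else 0)" for j
  have "(\<Sum>j<s. A i j * r j) = A i c * p" for i
    using \<open>c < s\<close> by (simp add: r_def if_distrib cong: if_cong)
  moreover have "\<forall>j<s. r j \<in> polyR n" using assms(1) by (simp add: r_def)
  ultimately show ?thesis unfolding image_phi_def by (intro CollectI exI[of _ r]) auto
qed

lemma column_in_kernel_psi:
  assumes "image_phi n (length gs) s A = kernel_psi n gs" "c < s"
  shows "(\<lambda>i. if i < length gs then A i c else 0) \<in> kernel_psi n gs"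
  using image_phi_column[OF polyR_1[of n] \<open>c < s\<close>, of "length gs" A] assms(1)
  unfolding mult_1_right by simp

lemma image_phi_subset_kernel_psi:
  assumes "matrix_over n (length gs) s A" and "\<forall>c<s. (\<Sum>i<length gs. A i c * gs ! i) = 0"
  shows "image_phi n (length gs) s A \<subseteq> kernel_psi n gs"
proof
  fix v assume "v \<in> image_phi n (length gs) s A"
  then obtain r where r: "\<forall>j<s. r j \<in> polyR n"
    and v: "v = (\<lambda>i. if i < length gs then \<Sum>j<s. A i j * r j else 0)"
    unfolding image_phi_def by blast
  have "v i \<in> polyR n" for i
    using r assms(1) unfolding v matrix_over_def by (auto intro!: polyR_sum polyR_mult)
  moreover have "(\<Sum>i<length gs. v i * gs ! i) = (\<Sum>j<s. r j * (\<Sum>i<length gs. A i j * gs ! i))"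
    unfolding v by (simp add: sum_distrib_left sum_distrib_right sum.swap[of _ "{..<s}"] ac_simps)
  then have "(\<Sum>i<length gs. v i * gs ! i) = 0" using assms(2) by simp
  ultimately show "v \<in> kernel_psi n gs" unfolding kernel_psi_def v by simp
qed

lemma ex_minimal_presentation:
  assumes "distinct gs" "set gs = G n I"
    and "matrix_over n (length gs) s A" "image_phi n (length gs) s A = kernel_psi n gs"
  shows "\<exists>s A. minimal_presentation n I gs s A"
proof -
  define presents where "presents s' \<longleftrightarrow> (\<exists>A'. matrix_over n (length gs) s' A' \<and>
      image_phi n (length gs) s' A' = kernel_psi n gs)" for s'
  obtain A0 where "matrix_over n (length gs) (LEAST s'. presents s') A0"
    "image_phi n (length gs) (LEAST s'. presents s') A0 = kernel_psi n gs"
    using LeastI[of presents s] assms(3,4) unfolding presents_def by blast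
  then have "minimal_presentation n I gs (LEAST s'. presents s') A0"
    using assms(1,2) Least_le[of presents] unfolding minimal_presentation_def presents_def by blast
  then show ?thesis by blast
qed

lemma kernel_psi_monom_in_mideal:
  assumes sep: "\<forall>i<length es. \<forall>j<length es. \<forall>c. i \<noteq> j \<longrightarrow>
      mdvd (es ! j) (c + es ! i) \<longrightarrow> (\<exists>b\<in>B. mdvd b c)"
    and v: "v \<in> kernel_psi n (map monom es :: 'k::field mpoly list)" and i: "i < length es"
  shows "v i \<in> mideal n B"
proof -
  have "\<exists>b\<in>B. mdvd b c" if c: "c \<in> Poly_Mapping.keys (v i)" for c
  proof -
    define f where "f j = (if mdvd (es ! j) (c + es ! i)
      then Poly_Mapping.lookup (v j) (c + es ! i - es ! j) else 0)" for j
    have "(\<Sum>j<length es. f j) = Poly_Mapping.lookup (\<Sum>j<length es. v j * map monom es ! j) (c + es ! i)"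
      unfolding f_def by (simp add: lookup_sum lookup_mult_monom)
    also have "\<dots> = 0" using v unfolding kernel_psi_def by simp
    finally have sum_f: "(\<Sum>j<length es. f j) = 0" .
    have "f i \<noteq> 0"
      using c by (simp add: f_def mdvd_add_left in_keys_iff)
    have "\<exists>j\<in>{..<length es} - {i}. f j \<noteq> 0"
    proof (rule ccontr)
      assume "\<not> ?thesis"
      then have "(\<Sum>j\<in>{..<length es} - {i}. f j) = 0" by simp
      then have "(\<Sum>j<length es. f j) = f i" using i by (simp add: sum.remove)
      then show False using sum_f \<open>f i \<noteq> 0\<close> by simp
    qed
    then obtain j where j: "j < length es" "j \<noteq> i" "f j \<noteq> 0" by blast
    then have "mdvd (es ! j) (c + es ! i)"
      unfolding f_def by (cases "mdvd (es ! j) (c + es ! i)") simp_all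
    then show ?thesis using sep i j(1,2) by blast
  qed
  moreover have "v i \<in> polyR n" using v unfolding kernel_psi_def by blast
  ultimately show ?thesis unfolding mideal_def by blast
qed

lemma presentation_entries_in_mideal:
  assumes sep: "\<forall>i<length es. \<forall>j<length es. \<forall>c. i \<noteq> j \<longrightarrow>
      mdvd (es ! j) (c + es ! i) \<longrightarrow> (\<exists>b\<in>B. mdvd b c)"
    and "image_phi n (length es) s A = kernel_psi n (map monom es :: 'k::field mpoly list)"
    and "i < length es" "j < s"
  shows "A i j \<in> mideal n B"
proof -
  have "(\<lambda>i. if i < length es then A i j else 0) \<in> kernel_psi n (map monom es :: 'k mpoly list)"
    using column_in_kernel_psi[of n "map monom es" s A j] assms(2,4) by simp
  from kernel_psi_monom_in_mideal[OF sep this \<open>i < length es\<close>] \<open>i < length es\<close>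
  show ?thesis by simp
qed

section \<open>Syzygies of monomials\<close>

lemma single_mult_monom_diff:
  "mdvd e L \<Longrightarrow> mdvd L D \<Longrightarrow>
    Poly_Mapping.single (D - L) c * monom (L - e) = Poly_Mapping.single (D - e) (c::'k::field)"
  unfolding single_mult_monom
  by (rule arg_cong[where f = "\<lambda>x. Poly_Mapping.single x c"], rule poly_mapping_eqI)
    (simp add: lookup_add lookup_minus mdvd_def)

lemma sum_shifted_singles:
  assumes "finite Ds" "(\<lambda>c. c + e) ` Poly_Mapping.keys p \<subseteq> Ds"
  shows "(\<Sum>D\<in>Ds. if mdvd e D then Poly_Mapping.single (D - e) (Poly_Mapping.lookup p (D - e)) else 0)
    = (p :: 'k::field mpoly)"
proof (rule poly_mapping_eqI)
  fix x
  have shift: "mdvd e D \<and> D - e = x \<longleftrightarrow> D = x + e" for D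
    using mdvd_diff_add_cancel mdvd_iff_add by fastforce
  have "Poly_Mapping.lookup (\<Sum>D\<in>Ds. if mdvd e D
        then Poly_Mapping.single (D - e) (Poly_Mapping.lookup p (D - e)) else 0) x
      = (\<Sum>D\<in>Ds. if D = x + e then Poly_Mapping.lookup p x else 0)"
    unfolding lookup_sum by (intro sum.cong) (auto simp: lookup_single when_def simp flip: shift)
  also have "\<dots> = Poly_Mapping.lookup p x"
    using assms by (auto simp: image_subset_iff in_keys_iff)
  finally show "Poly_Mapping.lookup (\<Sum>D\<in>Ds. if mdvd e D
      then Poly_Mapping.single (D - e) (Poly_Mapping.lookup p (D - e)) else 0) x
    = Poly_Mapping.lookup p x" .
qed

locale monomial_list =
  fixes n :: nat and es :: "(nat \<Rightarrow>\<^sub>0 nat) list"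
  assumes keys_es: "e \<in> set es \<Longrightarrow> Poly_Mapping.keys e \<subseteq> {1..n}"
begin

definition pair_syzygy :: "nat \<Rightarrow> nat \<Rightarrow> nat \<Rightarrow> 'k::field mpoly" where
  "pair_syzygy i j l =
     (if l = i then monom (mlcm (es ! i) (es ! j) - es ! i) else 0)
   - (if l = j then monom (mlcm (es ! i) (es ! j) - es ! j) else 0)"

definition syzygy_matrix :: "nat \<Rightarrow> nat \<Rightarrow> 'k::field mpoly" where
  "syzygy_matrix l c = pair_syzygy (c div length es) (c mod length es) l"

abbreviation syzygies :: "(nat \<Rightarrow> 'k::field mpoly) set" where
  "syzygies \<equiv> image_phi n (length es) (length es * length es) syzygy_matrix"

lemma pair_syzygy_polyR:
  assumes "i < length es" "j < length es"
  shows "(pair_syzygy i j l :: 'k::field mpoly) \<in> polyR n"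
proof -
  have "Poly_Mapping.keys (mlcm (es ! i) (es ! j)) \<subseteq> {1..n}"
    using keys_es[OF nth_mem[OF assms(1)]] keys_es[OF nth_mem[OF assms(2)]] by (simp add: keys_mlcm)
  then have "Poly_Mapping.keys (mlcm (es ! i) (es ! j) - es ! m) \<subseteq> {1..n}" for m
    by (rule subset_trans[OF keys_diff_nat])
  then have monom_polyR: "monom (mlcm (es ! i) (es ! j) - es ! m) \<in> polyR n" for m
    by (rule polyR_monom)
  show ?thesis
    unfolding pair_syzygy_def by (intro polyR_diff) (simp_all add: monom_polyR)
qed

lemma pair_syzygy_relation:
  assumes "i < length es" "j < length es"
  shows "(\<Sum>l<length es. pair_syzygy i j l * monom (es ! l)) = (0::'k::field mpoly)"
proof -
  let ?L = "mlcm (es ! i) (es ! j)"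
  have "(\<Sum>l<length es. pair_syzygy i j l * monom (es ! l)) =
      (\<Sum>l<length es. if l = i then monom (?L - es ! i) * monom (es ! i) else 0)
    - (\<Sum>l<length es. if l = j then monom (?L - es ! j) * monom (es ! j) else (0::'k mpoly))"
    unfolding sum_subtractf[symmetric] pair_syzygy_def by (intro sum.cong) (auto simp: algebra_simps)
  also have "\<dots> = monom ?L - monom ?L"
    using assms by (simp add: monom_mult mdvd_diff_add_cancel mdvd_mlcm1 mdvd_mlcm2)
  finally show ?thesis by simp
qed

lemma syzygy_matrix_column:
  assumes "i < length es" "j < length es"
  shows "i * length es + j < length es * length es"
    and "syzygy_matrix l (i * length es + j) = pair_syzygy i j l"
proof -
  have "Suc i * length es \<le> length es * length es"
    using assms(1) by (intro mult_le_mono1) simp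
  then show "i * length es + j < length es * length es" using assms(2) by simp
  have "(i * length es + j) div length es = i" "(i * length es + j) mod length es = j"
    using assms(2) by (metis add.commute add_cancel_right_left div_less div_mult_self1 less_nat_zero_code)
      (simp add: assms(2))
  then show "syzygy_matrix l (i * length es + j) = pair_syzygy i j l"
    unfolding syzygy_matrix_def by simp
qed

lemma syzygy_matrix_index:
  "c < length es * length es \<Longrightarrow> c div length es < length es \<and> c mod length es < length es"
  by (metis less_mult_imp_div_less mod_less_divisor mult_0_right not_gr0 not_less0)

lemma matrix_over_syzygy_matrix: "matrix_over n (length es) (length es * length es) syzygy_matrix"
  unfolding matrix_over_def syzygy_matrix_def using syzygy_matrix_index pair_syzygy_polyR by blast

lemma pair_syzygy_in_syzygies:
  assumes "p \<in> polyR n" "i < length es" "j < length es"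
  shows "(\<lambda>l. p * pair_syzygy i j l) \<in> (syzygies :: (nat \<Rightarrow> 'k::field mpoly) set)"
proof -
  have "(\<lambda>l. if l < length es then syzygy_matrix l (i * length es + j) * p else 0) \<in> syzygies"
    using assms(1) syzygy_matrix_column(1)[OF assms(2,3)] by (rule image_phi_column)
  moreover have "(\<lambda>l. if l < length es then syzygy_matrix l (i * length es + j) * p else 0)
      = (\<lambda>l. p * pair_syzygy i j l)"
    using assms(2,3) by (auto simp: syzygy_matrix_column(2) pair_syzygy_def)
  ultimately show ?thesis by simp
qed

lemma syzygies_subset_kernel_psi:
  "(syzygies :: (nat \<Rightarrow> 'k::field mpoly) set) \<subseteq> kernel_psi n (map monom es)"
proof (rule image_phi_subset_kernel_psi[where gs = "map monom es", simplified])
  show "matrix_over n (length es) (length es * length es) (syzygy_matrix :: _ \<Rightarrow> _ \<Rightarrow> 'k mpoly)"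
    by (rule matrix_over_syzygy_matrix)
  show "\<forall>c<length es * length es.
      (\<Sum>i<length es. syzygy_matrix i c * monom (es ! i)) = (0::'k mpoly)"
    unfolding syzygy_matrix_def using syzygy_matrix_index pair_syzygy_relation by blast
qed

text \<open>A kernel element of multidegree D is a combination of the pair syzygies that pair each
  monomial dividing D with one fixed such monomial.\<close>

lemma homogeneous_kernel_in_syzygies:
  fixes a :: "nat \<Rightarrow> 'k::field" and D :: "nat \<Rightarrow>\<^sub>0 nat"
  defines "S \<equiv> {i\<in>{..<length es}. mdvd (es ! i) D}"
  assumes D: "Poly_Mapping.keys D \<subseteq> {1..n}" and sum_a: "sum a S = 0"
  shows "(\<lambda>l. if l \<in> S then Poly_Mapping.single (D - es ! l) (a l) else 0) \<in> syzygies"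
proof (cases "S = {}")
  case True
  then show ?thesis using zero_in_image_phi by simp
next
  case False
  then obtain i0 where i0: "i0 \<in> S" by blast
  define L where "L i = mlcm (es ! i) (es ! i0)" for i
  define p where "p i = (Poly_Mapping.single (D - L i) (a i) :: 'k mpoly)" for i
  have L_dvd: "mdvd (L i) D" if "i \<in> S" for i
    using that i0 unfolding L_def S_def by (intro mlcm_least) auto
  have p_polyR: "p i \<in> polyR n" for i
    unfolding p_def using D keys_diff_nat[of D "L i"] by (intro polyR_single) blast
  have summand: "p i * pair_syzygy i i0 l =
      (if l = i then Poly_Mapping.single (D - es ! i) (a i) else 0)
    - (if l = i0 then Poly_Mapping.single (D - es ! i0) (a i) else 0)" if "i \<in> S" for i l
    using single_mult_monom_diff[OF mdvd_mlcm1 L_dvd[OF that, unfolded L_def]]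
      single_mult_monom_diff[OF mdvd_mlcm2 L_dvd[OF that, unfolded L_def]]
    unfolding pair_syzygy_def p_def L_def
    by (cases "l = i"; cases "l = i0") (simp_all add: right_diff_distrib)
  have "(\<Sum>i\<in>S. p i * pair_syzygy i i0 l) =
      (if l \<in> S then Poly_Mapping.single (D - es ! l) (a l) else 0)" for l
  proof -
    have "(\<Sum>i\<in>S. p i * pair_syzygy i i0 l) =
        (\<Sum>i\<in>S. if l = i then Poly_Mapping.single (D - es ! i) (a i) else 0)
      - (if l = i0 then Poly_Mapping.single (D - es ! i0) (sum a S) else 0)"
      by (simp add: summand sum_subtractf sum_single)
    then show ?thesis using sum_a by (simp add: S_def)
  qed
  moreover have "(\<lambda>l. \<Sum>i\<in>S. p i * pair_syzygy i i0 l) \<in> syzygies"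
    using p_polyR i0 by (intro image_phi_sum pair_syzygy_in_syzygies) (auto simp: S_def)
  ultimately show ?thesis by simp
qed

lemma kernel_psi_subset_syzygies:
  "kernel_psi n (map monom es :: 'k::field mpoly list) \<subseteq> syzygies"
proof
  fix v assume "v \<in> kernel_psi n (map monom es :: 'k mpoly list)"
  then have v_polyR: "\<And>i. v i \<in> polyR n" and v_0: "\<And>i. length es \<le> i \<Longrightarrow> v i = 0"
    and v_rel: "(\<Sum>i<length es. v i * monom (es ! i)) = 0"
    unfolding kernel_psi_def by auto
  define S where "S D = {i\<in>{..<length es}. mdvd (es ! i) D}" for D
  define w where "w D l = (if l \<in> S D
    then Poly_Mapping.single (D - es ! l) (Poly_Mapping.lookup (v l) (D - es ! l)) else 0)" for D l
  define Ds where "Ds = (\<Union>i<length es. (\<lambda>c. c + es ! i) ` Poly_Mapping.keys (v i))"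
  have "finite Ds" unfolding Ds_def by simp
  have "w D \<in> syzygies" if "D \<in> Ds" for D
  proof -
    obtain i c where ic: "i < length es" "c \<in> Poly_Mapping.keys (v i)" "D = c + es ! i"
      using \<open>D \<in> Ds\<close> unfolding Ds_def by blast
    have "Poly_Mapping.keys c \<subseteq> {1..n}" using v_polyR[of i] ic(2) unfolding polyR_def by blast
    then have "Poly_Mapping.keys D \<subseteq> {1..n}"
      using ic(3) keys_es[OF nth_mem[OF ic(1)]] by (simp add: keys_add_nat)
    moreover have "(\<Sum>j\<in>S D. Poly_Mapping.lookup (v j) (D - es ! j))
        = (\<Sum>j<length es. if mdvd (es ! j) D then Poly_Mapping.lookup (v j) (D - es ! j) else 0)"
      unfolding S_def by (rule sum.inter_filter) simp
    moreover have "\<dots> = Poly_Mapping.lookup (\<Sum>j<length es. v j * monom (es ! j)) D"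
      by (simp add: lookup_sum lookup_mult_monom)
    ultimately show ?thesis
      using homogeneous_kernel_in_syzygies[of D "\<lambda>j. Poly_Mapping.lookup (v j) (D - es ! j)"] v_rel
      unfolding S_def w_def by simp
  qed
  then have "(\<lambda>l. \<Sum>D\<in>Ds. w D l) \<in> syzygies"
    using \<open>finite Ds\<close> by (rule image_phi_sum[rotated])
  moreover have "(\<Sum>D\<in>Ds. w D l) = v l" for l
  proof (cases "l < length es")
    case True
    have "(\<lambda>c. c + es ! l) ` Poly_Mapping.keys (v l) \<subseteq> Ds" using True unfolding Ds_def by blast
    then show ?thesis
      using sum_shifted_singles[OF \<open>finite Ds\<close>] True unfolding w_def S_def by simp
  qed (simp add: w_def S_def v_0)
  ultimately show "v \<in> syzygies" by simp
qed

lemma syzygies_eq_kernel_psi: "syzygies = kernel_psi n (map monom es :: 'k::field mpoly list)"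
  using syzygies_subset_kernel_psi kernel_psi_subset_syzygies by blast

end
section \<open>The conjoined pair\<close>

lemma finite_minset:
  "\<forall>a\<in>M. Poly_Mapping.keys a \<subseteq> {1..n} \<Longrightarrow> \<forall>u\<in>minset M. mdeg u = d \<Longrightarrow> finite (minset M)"
  by (rule finite_subset[OF _ finite_mdeg_eq[of n d]]) (use minset_subset in blast)

lemma mscale_mdvd_imp_divisible:
  assumes "mdeg u = mdeg u'" "u \<noteq> u'" "mdvd (mscale k u) (c + mscale k u')"
    and var_powers: "\<forall>l\<in>Poly_Mapping.keys u. \<exists>b\<in>B. mdvd b (Poly_Mapping.single l (k - 1))"
  shows "\<exists>b\<in>B. mdvd b c"
proof -
  obtain l where l: "l \<in> Poly_Mapping.keys u" "k \<le> Poly_Mapping.lookup c l"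
    using mscale_mdvd_imp_lookup_ge assms(1-3) by blast
  then obtain b where "b \<in> B" "mdvd b (Poly_Mapping.single l (k - 1))"
    using var_powers by blast
  moreover have "mdvd (Poly_Mapping.single l (k - 1)) c"
    using l(2) by (simp add: single_mdvd_iff)
  ultimately show ?thesis using mdvd_trans by blast
qed

lemma mscale_list_mdvd_imp_divisible:
  assumes es: "set es = mscale k ` U" "distinct es" and deg: "\<forall>u\<in>U. mdeg u = d"
    and var_powers: "\<forall>u\<in>U. \<forall>l\<in>Poly_Mapping.keys u. \<exists>b\<in>B. mdvd b (Poly_Mapping.single l (k - 1))"
  shows "\<forall>i<length es. \<forall>j<length es. \<forall>c. i \<noteq> j \<longrightarrow>
      mdvd (es ! j) (c + es ! i) \<longrightarrow> (\<exists>b\<in>B. mdvd b c)"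
proof (intro allI impI)
  fix i j c assume ij: "i < length es" "j < length es" "i \<noteq> j" "mdvd (es ! j) (c + es ! i)"
  have "es ! i \<in> mscale k ` U" "es ! j \<in> mscale k ` U" using ij(1,2) es(1) nth_mem by blast+
  then obtain u u' where u: "u \<in> U" "es ! i = mscale k u" "u' \<in> U" "es ! j = mscale k u'"
    by blast
  moreover have "es ! i \<noteq> es ! j" using ij(1-3) es(2) by (simp add: nth_eq_iff_index_eq)
  then have "u' \<noteq> u" using u by auto
  ultimately show "\<exists>b\<in>B. mdvd b c"
    using mscale_mdvd_imp_divisible[of u' u k c B] ij(4) deg var_powers by simp
qed

lemma frob_pow_presentation_in_ideal:
  assumes I: "I = ideal_gen n (monom ` MI)" and J: "J = ideal_gen n (monom ` MJ)"
    and MI: "\<forall>a\<in>MI. Poly_Mapping.keys a \<subseteq> {1..n}" and MJ: "\<forall>b\<in>MJ. Poly_Mapping.keys b \<subseteq> {1..n}"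
    and "k > 0" and degI: "\<forall>u\<in>minset MI. mdeg u = d1"
    and var_powers:
      "\<forall>u\<in>minset MI. \<forall>l\<in>Poly_Mapping.keys u. \<exists>b\<in>MJ. mdvd b (Poly_Mapping.single l (k - 1))"
  shows "\<exists>gs s A. minimal_presentation n (frob_pow n k I :: 'k::field mpoly set) gs s A \<and>
    (\<forall>i<length gs. \<forall>j<s. A i j \<in> J)"
proof -
  let ?F = "mscale k ` minset MI"
  have "finite ?F" using finite_minset[OF MI degI] by (rule finite_imageI)
  then obtain es where es: "set es = ?F" "distinct es"
    by (metis finite_distinct_list)
  have F: "\<forall>a\<in>?F. Poly_Mapping.keys a \<subseteq> {1..n}"
    using MI minset_subset keys_mscale \<open>k > 0\<close> by fastforce
  interpret monomial_list n es
    by unfold_locales (use F es(1) in blast)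
  define gs where "gs = (map monom es :: 'k mpoly list)"
  have "distinct gs"
    unfolding gs_def distinct_map using es(2) inj_on_subset[OF inj_monom subset_UNIV] by blast
  moreover have "set gs = G n (frob_pow n k I)"
    unfolding gs_def I frob_pow_ideal_gen_monom[OF MI] G_ideal_gen_monom[OF F]
    using es(1) \<open>k > 0\<close> by (simp add: minset_mscale_minset)
  moreover have "matrix_over n (length gs) (length es * length es) syzygy_matrix"
    using matrix_over_syzygy_matrix by (simp add: gs_def)
  moreover have "image_phi n (length gs) (length es * length es) syzygy_matrix = kernel_psi n gs"
    using syzygies_eq_kernel_psi by (simp add: gs_def)
  ultimately obtain s A where pres: "minimal_presentation n (frob_pow n k I) gs s A"
    using ex_minimal_presentation by blast
  moreover have "image_phi n (length es) s A = kernel_psi n gs"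
    using pres unfolding minimal_presentation_def gs_def by simp
  then have "\<forall>i<length gs. \<forall>j<s. A i j \<in> J"
    unfolding J ideal_gen_monom_eq_mideal[OF MJ] gs_def length_map
    using presentation_entries_in_mideal[OF mscale_list_mdvd_imp_divisible[OF es degI var_powers]]
    by blast
  ultimately show ?thesis by blast
qed

lemma var_power_mdvd:
  assumes "ideal_gen n ((\<lambda>i. var i ^ j) ` L) \<subseteq> (ideal_gen n (monom ` M) :: 'k::field mpoly set)"
    and "\<forall>b\<in>M. Poly_Mapping.keys b \<subseteq> {1..n}" and "l \<in> L"
  shows "\<exists>b\<in>M. mdvd b (Poly_Mapping.single l j)"
proof -
  have "1 * (var l :: 'k mpoly) ^ j \<in> ideal_gen n ((\<lambda>i. var i ^ j) ` L)"
    using \<open>l \<in> L\<close> by (intro mult_in_ideal_gen) auto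
  then have "(monom (Poly_Mapping.single l j) :: 'k mpoly) \<in> mideal n M"
    using assms(1) ideal_gen_monom_eq_mideal[OF assms(2)] by (auto simp: var_power)
  then show ?thesis by (simp add: monom_in_mideal_iff)
qed

lemma var_powers_mdvd_minset:
  assumes "ideal_gen n ((\<lambda>i. var i ^ j) ` {1..Max (insert 0 (\<Union>a\<in>minset M. Poly_Mapping.keys a))})
      \<subseteq> (ideal_gen n (monom ` MJ) :: 'k::field mpoly set)"
    and M: "\<forall>a\<in>M. Poly_Mapping.keys a \<subseteq> {1..n}" and "finite (minset M)"
    and MJ: "\<forall>b\<in>MJ. Poly_Mapping.keys b \<subseteq> {1..n}"
  shows "\<forall>u\<in>minset M. \<forall>l\<in>Poly_Mapping.keys u. \<exists>b\<in>MJ. mdvd b (Poly_Mapping.single l j)"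
proof (intro ballI)
  fix u l assume u: "u \<in> minset M" "l \<in> Poly_Mapping.keys u"
  have "l \<in> {1..n}" using u M minset_subset by blast
  moreover have "l \<le> Max (insert 0 (\<Union>a\<in>minset M. Poly_Mapping.keys a))"
    using u \<open>finite (minset M)\<close> by (intro Max_ge) auto
  ultimately show "\<exists>b\<in>MJ. mdvd b (Poly_Mapping.single l j)"
    using var_power_mdvd[OF assms(1) MJ] by simp
qed

theorem lemma2p5:
  fixes n d1 d2 k :: nat and I J :: "'k::field mpoly set"
  assumes "monomial_ideal n I" and "monomial_ideal n J"
    and "\<forall>a\<in>mingens n I. mdeg a = d1"
    and "\<forall>a\<in>mingens n J. mdeg a = d2"
    and "k > 1"
    and "ideal_gen n ((\<lambda>i. var i ^ (k - 1)) `
           {1..Max (insert 0 (\<Union>a\<in>mingens n I. Poly_Mapping.keys a))}) \<subseteq> J"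
  shows "conjoined n (frob_pow n k I) J"
proof -
  obtain MI where MI: "\<forall>a\<in>MI. Poly_Mapping.keys a \<subseteq> {1..n}" and I: "I = ideal_gen n (monom ` MI)"
    using assms(1) unfolding monomial_ideal_def by blast
  obtain MJ where MJ: "\<forall>b\<in>MJ. Poly_Mapping.keys b \<subseteq> {1..n}" and J: "J = ideal_gen n (monom ` MJ)"
    using assms(2) unfolding monomial_ideal_def by blast
  have GI: "mingens n I = minset MI"
    unfolding I by (rule mingens_ideal_gen_monom[OF MI])
  have GJ: "mingens n J = minset MJ"
    unfolding J by (rule mingens_ideal_gen_monom[OF MJ])
  have "k > 0" using assms(5) by simp
  have degI: "\<forall>u\<in>minset MI. mdeg u = d1" and degJ: "\<forall>b\<in>minset MJ. mdeg b = d2"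
    using assms(3,4) GI GJ by simp_all
  have var_powers:
    "\<forall>u\<in>minset MI. \<forall>l\<in>Poly_Mapping.keys u. \<exists>b\<in>MJ. mdvd b (Poly_Mapping.single l (k - 1))"
    using assms(6)[unfolded GI J] MI finite_minset[OF MI degI] MJ by (rule var_powers_mdvd_minset)
  show ?thesis
    unfolding conjoined_def
    using card_G_ideal_prod_frob_pow[OF I J MI MJ \<open>k > 0\<close> degI degJ var_powers]
      frob_pow_presentation_in_ideal[OF I J MI MJ \<open>k > 0\<close> degI var_powers] by blast
qed

end
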